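(* There exists a constant $C>0$, independent of $n$, such that for all sufficiently large $n$, \[ \zeta_n< C+\frac{\min\{1-\beta,\alpha\}}{\lambda_1}\log n . \]
   Context: Fix constants $r_0,d_0\ge 0$ with $\lambda_0:=r_0-d_0<0$, $d_1>0$, $k>1$, $\alpha\in(0,1)$, $\beta\in(0,1)$. Let $f:[0,\infty)^2\to[0,\infty)$ satisfy: (A1) $f$ is Lipschitz continuous; (A2) $f(x,y)=r_1$ when $x+y=0$ and $f(x,y)=d_1$ when $x+y=1$, where $r_1:=f(0,0)>d_1$; (A3) $f(x,y)=\Phi(x+y)$ for some non-increasing function $\Phi:[0,\infty)\to[0,\infty)$; (A4) $f(x,y)\to0$ as $x\to\infty$ and as $y\to\infty$; (A5) $f(x,y)\ge \lambda_1(1-(x+y))+d_1$ for all $x,y\ge0$, where $\lambda_1:=r_1-d_1>0$. Put $\phi(x,y):=f(x,y)-d_1$. For each integer $n\ge1$ let $K=K(n):=kn$ and let $(y_0,y_1,y_\beta)$ solve \[ \dot y_0=\lambda_0 y_0,\qquad \dot y_1=\phi(y_0,y_1)\,y_1+n^{-\alpha}y_0,\qquad \dot y_\beta=\phi(y_0,y_1)\,y_\beta, \] with $(y_0(0),y_1(0),y_\beta(0))=(n/K,\,n^\beta/K,\,n^\beta/K)$. Define the deterministic recurrence time $\zeta_n:=\inf\{t>0: y_1(t)=n/K\}$. *)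

theory Defs
  imports "HOL-Analysis.Analysis"
begin

definition recurrence_time :: "(real \<Rightarrow> real) \<Rightarrow> real \<Rightarrow> real" where
  "recurrence_time y c = Inf {t. t > 0 \<and> y t = c}"

end

theory Submission
  imports Defs
begin

(* As long as y1 stays below the level 1/K, the lower bound (A5) makes the logit of y1 grow at
   rate lambda1, up to a bounded total loss caused by the exponentially decaying population y0.
   Starting either from ln y1(0) = -(1 - beta) ln n - ln k, or, after unit time, from
   ln y1(1) >= -alpha ln n - O(1), which the immigration term n^-alpha y0 guarantees, the logit
   reaches logit(1/k) within time min(1 - beta, alpha) ln n / lambda1 + O(1). *)

definition logit :: "real \<Rightarrow> real" where
  "logit v = ln v - ln (1 - v)"

lemma logit_less_logit: "0 < v \<Longrightarrow> v < w \<Longrightarrow> w < 1 \<Longrightarrow> logit v < logit w"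
  unfolding logit_def by (smt (verit) ln_less_cancel_iff)

lemma ln_le_logit: "0 < v \<Longrightarrow> v < 1 \<Longrightarrow> ln v \<le> logit v"
  unfolding logit_def by simp

lemma logit_one_over: "1 < k \<Longrightarrow> logit (1 / k) = - ln (k - 1)"
proof -
  assume "1 < k"
  then have "1 - 1 / k = (k - 1) / k" by (simp add: field_simps)
  with \<open>1 < k\<close> show ?thesis unfolding logit_def by (simp add: ln_div)
qed

lemma DERIV_logit:
  assumes "(u has_real_derivative u') (at x within S)" and "0 < u x" "u x < 1"
  shows "((\<lambda>t. logit (u t)) has_real_derivative u' / (u x * (1 - u x))) (at x within S)"
proof -
  have "((\<lambda>t. logit (u t)) has_real_derivative u' / u x - (- u') / (1 - u x)) (at x within S)"
    unfolding logit_def using assms by (auto intro!: derivative_eq_intros)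
  moreover have "u' / u x - (- u') / (1 - u x) = u' / (u x * (1 - u x))"
    using assms(2,3) by (simp add: field_simps)
  ultimately show ?thesis by simp
qed

lemma recurrence_time_le:
  assumes "0 < t" "y t = c"
  shows "recurrence_time y c \<le> t"
  unfolding recurrence_time_def
  by (rule cInf_lower) (use assms in \<open>auto intro: bdd_belowI[of _ 0]\<close>)

lemma DERIV_nonneg_imp_le_within:
  fixes g g' :: "real \<Rightarrow> real"
  assumes "a \<le> b" and "{a..b} \<subseteq> S"
    and der: "\<And>t. a \<le> t \<Longrightarrow> t \<le> b \<Longrightarrow> (g has_real_derivative g' t) (at t within S)"
    and nonneg: "\<And>t. a < t \<Longrightarrow> t < b \<Longrightarrow> 0 \<le> g' t"
  shows "g a \<le> g b"
proof (cases "a = b")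
  case False
  with \<open>a \<le> b\<close> have "a < b" by simp
  moreover have "(g has_derivative (\<lambda>h. g' t * h)) (at t within {a..b})" if "a \<le> t" "t \<le> b" for t
    using DERIV_subset[OF der[OF that] \<open>{a..b} \<subseteq> S\<close>] by (simp add: has_field_derivative_def)
  ultimately obtain t where "t \<in> {a<..<b}" "g b - g a = g' t * (b - a)"
    using mvt_simple[of a b g "\<lambda>t h. g' t * h"] by blast
  with nonneg \<open>a < b\<close> show ?thesis by (smt (verit) greaterThanLessThan_iff zero_le_mult_iff)
qed simp

lemma DERIV_linear_imp_exp:
  fixes y :: "real \<Rightarrow> real"
  assumes der: "\<And>t. 0 \<le> t \<Longrightarrow> (y has_real_derivative l * y t) (at t within {0..})" and "0 \<le> t"
  shows "y t = y 0 * exp (l * t)"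
proof -
  have "((\<lambda>s. y s * exp (- l * s)) has_real_derivative 0) (at s within {0..})" if "s \<in> {0..}" for s
    using that by (auto intro!: derivative_eq_intros der simp: algebra_simps)
  then obtain C where "\<forall>s\<in>{0..}. y s * exp (- l * s) = C"
    using has_field_derivative_zero_constant[of "{0..}" "\<lambda>s. y s * exp (- l * s)"] by auto
  with \<open>0 \<le> t\<close> have "y t * exp (- l * t) = y 0" by force
  then show ?thesis by (simp add: exp_minus field_simps)
qed

text \<open>A solution of u' = p u + q with q > 0 cannot reach 0: at a first zero it would have to be increasing.\<close>
lemma linear_forced_DERIV_pos:
  fixes u p q :: "real \<Rightarrow> real"
  assumes der: "\<And>t. 0 \<le> t \<Longrightarrow> (u has_real_derivative p t * u t + q t) (at t within {0..})"
    and q_pos: "\<And>t. 0 \<le> t \<Longrightarrow> 0 < q t" and u_0: "0 < u 0" and "0 \<le> t"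
  shows "0 < u t"
proof (rule ccontr)
  assume "\<not> 0 < u t"
  have cont: "continuous_on {0..s} u" for s
    by (rule continuous_on_subset[OF DERIV_continuous_on[OF der]]) auto
  have zero_before: "\<exists>z. 0 \<le> z \<and> z \<le> s \<and> u z = 0" if "0 \<le> s" "u s \<le> 0" for s
    using IVT2'[OF that(2) _ that(1) cont] u_0 by simp
  define Z where "Z = {s \<in> {0..t}. u s = 0}"
  have "Z \<noteq> {}" using zero_before[OF \<open>0 \<le> t\<close>] \<open>\<not> 0 < u t\<close> unfolding Z_def by auto
  moreover have "bdd_below Z" unfolding Z_def by (auto intro: bdd_belowI[of _ 0])
  moreover have "closed Z" unfolding Z_def by (rule continuous_closed_preimage_constant[OF cont]) simp
  ultimately have "Inf Z \<in> Z" by (rule closed_contains_Inf)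
  define m where "m = Inf Z"
  have m: "0 \<le> m" "m \<le> t" "u m = 0" using \<open>Inf Z \<in> Z\<close> unfolding m_def Z_def by auto
  have first: "m \<le> z" if "z \<in> Z" for z
    using cInf_lower[OF that \<open>bdd_below Z\<close>] unfolding m_def .
  have "0 < m" using m u_0 by (cases "m = 0") auto
  have "(u has_real_derivative q m) (at m within {0..})" using der[OF m(1)] m(3) by simp
  then obtain d where d: "0 < d" "\<And>h. 0 < h \<Longrightarrow> m - h \<in> {0..} \<Longrightarrow> h < d \<Longrightarrow> u (m - h) < u m"
    using has_real_derivative_pos_inc_left q_pos[OF m(1)] by blast
  define h where "h = min (d / 2) (m / 2)"
  have h: "0 < h" "h < d" "h < m" using d(1) \<open>0 < m\<close> unfolding h_def by auto
  then have "u (m - h) < 0" using d(2)[of h] m(3) by simp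
  then obtain z where "0 \<le> z" "z \<le> m - h" "u z = 0" using zero_before[of "m - h"] h by auto
  then have "z \<in> Z" using m(2) h unfolding Z_def by simp
  then show False using first \<open>z \<le> m - h\<close> h by fastforce
qed

locale decay_rates =
  fixes l0 l1 k :: real
  assumes l0_neg: "l0 < 0" and l1_pos: "0 < l1" and k_gt_1: "1 < k"
begin

text \<open>The logit of the solution loses at most this much, namely the integral of
  l1 * exp (l0 * t) / (k - 1) over [0, \<infinity>).\<close>
definition logit_loss :: real where
  "logit_loss = l1 / ((k - 1) * - l0)"

definition immigration_gain :: real where
  "immigration_gain = exp l0 * (1 - exp (- l1)) / (k * l1)"

definition hitting_const :: real where
  "hitting_const = logit_loss + \<bar>ln (k - 1)\<bar> + ln k + \<bar>ln immigration_gain\<bar> + l1"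

lemma logit_loss_pos: "0 < logit_loss"
  unfolding logit_loss_def using l0_neg l1_pos k_gt_1 by (intro divide_pos_pos mult_pos_pos) auto

lemma immigration_gain_pos: "0 < immigration_gain"
  unfolding immigration_gain_def using l1_pos k_gt_1 by simp

lemma one_over_k_less_1: "1 / k < 1"
  using k_gt_1 by simp

lemma hitting_const_pos: "0 < hitting_const"
  unfolding hitting_const_def using logit_loss_pos l1_pos ln_gt_zero[OF k_gt_1]
  by (smt (verit) abs_ge_zero)

end

text \<open>Here y, u and c stand for y0, y1 and n powr -alpha; of the growth rate p = phi(y0, y1)
  only the lower bound (A5) is retained.\<close>
locale logistic_with_immigration = decay_rates +
  fixes c :: real and y u p :: "real \<Rightarrow> real"
  assumes c_pos: "0 < c"
    and y_eq: "\<And>t. 0 \<le> t \<Longrightarrow> y t = exp (l0 * t) / k"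
    and u_deriv: "\<And>t. 0 \<le> t \<Longrightarrow> (u has_real_derivative p t * u t + c * y t) (at t within {0..})"
    and u_0_pos: "0 < u 0" and u_0_below: "u 0 < 1 / k"
    and p_lower: "\<And>t. 0 \<le> t \<Longrightarrow> 0 \<le> u t \<Longrightarrow> l1 * (1 - (y t + u t)) \<le> p t"
begin

lemma y_pos: "0 \<le> t \<Longrightarrow> 0 < y t"
  using y_eq k_gt_1 by simp

lemma y_le: "0 \<le> t \<Longrightarrow> y t \<le> 1 / k"
  using y_eq k_gt_1 l0_neg by (simp add: divide_right_mono mult_nonpos_nonneg)

lemma u_pos: "0 \<le> t \<Longrightarrow> 0 < u t"
  using linear_forced_DERIV_pos[OF u_deriv] c_pos y_pos u_0_pos by simp

lemma u_below_level:
  assumes no_hit: "\<forall>s\<in>{0<..T}. u s \<noteq> 1 / k" and "0 \<le> t" "t \<le> T"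
  shows "u t < 1 / k"
proof (rule ccontr)
  assume "\<not> u t < 1 / k"
  moreover have "continuous_on {0..t} u"
    by (rule continuous_on_subset[OF DERIV_continuous_on[OF u_deriv]]) auto
  ultimately obtain s where "0 \<le> s" "s \<le> t" "u s = 1 / k"
    using IVT'[of u 0 "1 / k" t] u_0_below \<open>0 \<le> t\<close> by auto
  moreover have "s \<noteq> 0" using \<open>u s = 1 / k\<close> u_0_below by auto
  ultimately show False using no_hit \<open>t \<le> T\<close> by auto
qed

text \<open>The right-hand side is the derivative of logit (u t), by DERIV_logit.\<close>
lemma logit_rate_lower:
  assumes "0 \<le> t" and u_t: "u t < 1 / k"
  shows "l1 - l1 * exp (l0 * t) / (k - 1) \<le> (p t * u t + c * y t) / (u t * (1 - u t))"
proof -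
  have w: "0 < u t" "u t < 1" using u_pos[OF \<open>0 \<le> t\<close>] u_t one_over_k_less_1 by linarith+
  have "l1 - l1 * exp (l0 * t) / (k - 1) = l1 - l1 * (y t * (k / (k - 1)))"
    using y_eq[OF \<open>0 \<le> t\<close>] k_gt_1 by (simp add: field_simps)
  also have "\<dots> \<le> l1 - l1 * (y t / (1 - u t))"
  proof -
    have "1 / (1 - u t) \<le> k / (k - 1)" using u_t k_gt_1 w by (simp add: field_simps)
    then have "y t / (1 - u t) \<le> y t * (k / (k - 1))"
      using y_pos[OF \<open>0 \<le> t\<close>] by (metis mult_left_mono less_imp_le times_divide_eq_right mult.right_neutral)
    from mult_left_mono[OF this less_imp_le[OF l1_pos]] show ?thesis by linarith
  qed
  also have "\<dots> = l1 * (1 - (y t + u t)) / (1 - u t)" using w by (simp add: field_simps)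
  also have "\<dots> \<le> p t / (1 - u t)"
    using p_lower[OF \<open>0 \<le> t\<close>] w by (simp add: divide_right_mono)
  also have "\<dots> = p t * u t / (u t * (1 - u t))" using w by simp
  also have "\<dots> \<le> (p t * u t + c * y t) / (u t * (1 - u t))"
    using w c_pos y_pos[OF \<open>0 \<le> t\<close>] by (intro divide_right_mono) auto
  finally show ?thesis .
qed

lemma logit_growth:
  assumes no_hit: "\<forall>t\<in>{0<..T}. u t \<noteq> 1 / k" and "0 \<le> s" "s \<le> T"
  shows "logit (u s) + l1 * (T - s) - logit_loss * exp (l0 * s)
    \<le> logit (u T) - logit_loss * exp (l0 * T)"
proof -
  define u' where "u' t = p t * u t + c * y t" for t
  define H where "H t = logit (u t) - l1 * t - logit_loss * exp (l0 * t)" for t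
  have "H s \<le> H T"
  proof (rule DERIV_nonneg_imp_le_within[of s T "{0..}" H
        "\<lambda>t. u' t / (u t * (1 - u t)) - l1 - logit_loss * (exp (l0 * t) * l0)"])
    fix t assume "s \<le> t" "t \<le> T"
    then have "0 \<le> t" "0 < u t" "u t < 1"
      using \<open>0 \<le> s\<close> u_pos u_below_level[OF no_hit, of t] one_over_k_less_1 by fastforce+
    then show "(H has_real_derivative
        u' t / (u t * (1 - u t)) - l1 - logit_loss * (exp (l0 * t) * l0)) (at t within {0..})"
      unfolding H_def u'_def by (auto intro!: derivative_eq_intros DERIV_logit u_deriv)
  next
    fix t assume "s < t" "t < T"
    then have "0 \<le> t" "u t < 1 / k" using \<open>0 \<le> s\<close> u_below_level[OF no_hit, of t] by auto
    moreover have "logit_loss * (exp (l0 * t) * l0) = - l1 * exp (l0 * t) / (k - 1)"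
      unfolding logit_loss_def using l0_neg k_gt_1 by (simp add: field_simps)
    ultimately show "0 \<le> u' t / (u t * (1 - u t)) - l1 - logit_loss * (exp (l0 * t) * l0)"
      unfolding u'_def using logit_rate_lower by fastforce
  qed (use assms in auto)
  then show ?thesis unfolding H_def by (simp add: algebra_simps)
qed

lemma hits_level_from:
  assumes "0 \<le> s" "s \<le> T" and budget: "logit_loss - ln (k - 1) \<le> ln (u s) + l1 * (T - s)"
  shows "\<exists>t\<in>{0<..T}. u t = 1 / k"
proof (rule ccontr)
  assume "\<not> ?thesis"
  then have no_hit: "\<forall>t\<in>{0<..T}. u t \<noteq> 1 / k" by blast
  have below: "0 < u t" "u t < 1 / k" if "0 \<le> t" "t \<le> T" for t
    using u_pos u_below_level[OF no_hit] that by auto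
  have "exp (l0 * s) \<le> 1" using l0_neg \<open>0 \<le> s\<close> by (simp add: mult_nonpos_nonneg)
  then have "ln (u s) + l1 * (T - s) - logit_loss
      \<le> logit (u s) + l1 * (T - s) - logit_loss * exp (l0 * s)"
    using ln_le_logit[of "u s"] below[OF assms(1,2)] one_over_k_less_1 logit_loss_pos
    by (smt (verit) mult_left_le)
  also have "\<dots> \<le> logit (u T) - logit_loss * exp (l0 * T)"
    by (rule logit_growth[OF no_hit assms(1,2)])
  also have "\<dots> < logit (1 / k)"
    using logit_less_logit[of "u T" "1 / k"] below[of T] assms(1,2) one_over_k_less_1 logit_loss_pos
    by (smt (verit) exp_gt_zero mult_pos_pos)
  also have "\<dots> = - ln (k - 1)" by (rule logit_one_over[OF k_gt_1])
  finally show False using budget by linarith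
qed

text \<open>The immigration term c y drives u up to order c within unit time, whatever u 0 is.\<close>
lemma u_at_one_lower:
  assumes "\<forall>t\<in>{0..1}. u t \<le> 1"
  shows "c * immigration_gain \<le> u 1"
proof -
  define A where "A = c * exp l0 / (k * l1)"
  define K where "K t = (u t - A) * exp (l1 * t)" for t
  have "K 0 \<le> K 1"
  proof (rule DERIV_nonneg_imp_le_within[of 0 1 "{0..}" K
        "\<lambda>t. (p t * u t + c * y t + l1 * (u t - A)) * exp (l1 * t)"])
    fix t :: real assume "0 \<le> t" "t \<le> 1"
    then have "(K has_real_derivative (p t * u t + c * y t) * exp (l1 * t) + (u t - A) * (exp (l1 * t) * l1))
        (at t within {0..})"
      unfolding K_def by (auto intro!: derivative_eq_intros u_deriv)
    then show "(K has_real_derivative (p t * u t + c * y t + l1 * (u t - A)) * exp (l1 * t))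
        (at t within {0..})"
      by (simp add: algebra_simps)
  next
    fix t :: real assume t: "0 < t" "t < 1"
    have "y t \<le> 1" using y_le[of t] t one_over_k_less_1 by simp
    moreover have "u t \<le> 1" using assms t by simp
    ultimately have "l1 * - 1 \<le> l1 * (1 - (y t + u t))"
      using l1_pos by (intro mult_left_mono) auto
    then have "- l1 \<le> p t" using p_lower[of t] u_pos[of t] t by simp
    then have "- l1 * u t \<le> p t * u t" using mult_right_mono[of "- l1" "p t" "u t"] u_pos[of t] t by simp
    moreover have "exp l0 \<le> exp (l0 * t)" using l0_neg t by (simp add: mult_le_cancel_left1)
    then have "l1 * A \<le> c * y t"
      unfolding A_def using y_eq[of t] t c_pos l1_pos k_gt_1 by (simp add: divide_right_mono)
    ultimately have "0 \<le> p t * u t + c * y t + l1 * (u t - A)"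
      by (simp add: right_diff_distrib)
    then show "0 \<le> (p t * u t + c * y t + l1 * (u t - A)) * exp (l1 * t)" by simp
  qed simp_all
  then have "- A \<le> (u 1 - A) * exp l1" unfolding K_def using u_0_pos by simp
  from mult_right_mono[OF this, of "exp (- l1)"] have "- A * exp (- l1) \<le> u 1 - A"
    by (simp add: mult.assoc exp_minus_inverse)
  moreover have "c * immigration_gain = A - A * exp (- l1)"
    unfolding A_def immigration_gain_def using k_gt_1 l1_pos by (simp add: field_simps)
  ultimately show ?thesis by linarith
qed

lemma hits_level_via_immigration:
  assumes "1 \<le> T"
    and budget: "logit_loss - ln (k - 1) \<le> ln (c * immigration_gain) + l1 * (T - 1)"
  shows "\<exists>t\<in>{0<..T}. u t = 1 / k"
proof (cases "\<exists>t\<in>{0<..1}. u t = 1 / k")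
  case True
  then show ?thesis using \<open>1 \<le> T\<close> by force
next
  case False
  then have no_hit: "\<forall>t\<in>{0<..1}. u t \<noteq> 1 / k" by blast
  have "\<forall>t\<in>{0..1}. u t \<le> 1"
  proof
    fix t :: real assume "t \<in> {0..1}"
    then show "u t \<le> 1" using u_below_level[OF no_hit, of t] one_over_k_less_1 by simp
  qed
  then have "ln (c * immigration_gain) \<le> ln (u 1)"
    using u_at_one_lower c_pos immigration_gain_pos u_pos[of 1] by simp
  then show ?thesis using budget \<open>1 \<le> T\<close> by (intro hits_level_from[of 1 T]) auto
qed

lemma hits_level_before_log_bound:
  assumes "0 \<le> a" and "- a - ln k \<le> ln (u 0) \<or> - a \<le> ln c"
  shows "\<exists>t\<in>{0<..(a + hitting_const) / l1}. u t = 1 / k"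
proof -
  define T where "T = (a + hitting_const) / l1"
  have l1_T: "l1 * T = a + hitting_const" using l1_pos unfolding T_def by simp
  have "0 \<le> T" unfolding T_def using assms(1) hitting_const_pos l1_pos by simp
  note const_bounds = abs_ge_minus_self[of "ln (k - 1)"] abs_ge_zero[of "ln (k - 1)"]
    abs_ge_minus_self[of "ln immigration_gain"] abs_ge_zero[of "ln immigration_gain"]
    logit_loss_pos ln_gt_zero[OF k_gt_1] l1_pos
  from assms(2) have "\<exists>t\<in>{0<..T}. u t = 1 / k"
  proof
    assume "- a - ln k \<le> ln (u 0)"
    then have "logit_loss - ln (k - 1) \<le> ln (u 0) + l1 * T"
      using l1_T const_bounds unfolding hitting_const_def by linarith
    then show ?thesis using \<open>0 \<le> T\<close> by (intro hits_level_from[of 0 T]) auto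
  next
    assume "- a \<le> ln c"
    have "l1 * 1 \<le> l1 * T" using l1_T assms(1) const_bounds unfolding hitting_const_def by linarith
    then have "1 \<le> T" using l1_pos by simp
    moreover have "ln (c * immigration_gain) = ln c + ln immigration_gain"
      using c_pos immigration_gain_pos by (simp add: ln_mult)
    ultimately have "logit_loss - ln (k - 1) \<le> ln (c * immigration_gain) + l1 * (T - 1)"
      using \<open>- a \<le> ln c\<close> l1_T const_bounds unfolding hitting_const_def right_diff_distrib
      by linarith
    then show ?thesis using \<open>1 \<le> T\<close> by (intro hits_level_via_immigration)
  qed
  then show ?thesis unfolding T_def .
qed

lemma recurrence_time_bound:
  assumes "0 \<le> a" and "- a - ln k \<le> ln (u 0) \<or> - a \<le> ln c"
  shows "{t. 0 < t \<and> u t = 1 / k} \<noteq> {}" and "recurrence_time u (1 / k) \<le> (a + hitting_const) / l1"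
proof -
  obtain t where "0 < t" "t \<le> (a + hitting_const) / l1" "u t = 1 / k"
    using hits_level_before_log_bound[OF assms] by auto
  then show "{t. 0 < t \<and> u t = 1 / k} \<noteq> {}" and "recurrence_time u (1 / k) \<le> (a + hitting_const) / l1"
    using recurrence_time_le[of t u] by auto
qed

end

lemma powr_over_linear_bounds:
  fixes x \<beta> k :: real
  assumes "1 < x" "\<beta> < 1" "0 < k"
  shows "0 < x powr \<beta> / (k * x)" and "x powr \<beta> / (k * x) < 1 / k"
    and "ln (x powr \<beta> / (k * x)) = - ((1 - \<beta>) * ln x) - ln k"
proof -
  have "x powr \<beta> < x powr 1" using assms by (intro powr_less_mono) auto
  then show "x powr \<beta> / (k * x) < 1 / k" using assms by (simp add: field_simps)
  show "0 < x powr \<beta> / (k * x)" using assms by simp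
  show "ln (x powr \<beta> / (k * x)) = - ((1 - \<beta>) * ln x) - ln k"
    using assms by (simp add: ln_div ln_mult ln_powr algebra_simps)
qed

context decay_rates
begin

lemma recurrence_time_log_bound:
  fixes x \<alpha> \<beta> :: real and y u :: "real \<Rightarrow> real" and F :: "real \<Rightarrow> real \<Rightarrow> real"
  assumes "1 < x" "0 < \<alpha>" "0 < \<beta>" "\<beta> < 1"
    and y_deriv: "\<And>t. 0 \<le> t \<Longrightarrow> (y has_real_derivative l0 * y t) (at t within {0..})"
    and u_deriv: "\<And>t. 0 \<le> t \<Longrightarrow>
      (u has_real_derivative F (y t) (u t) * u t + x powr - \<alpha> * y t) (at t within {0..})"
    and "y 0 = 1 / k" and u_0: "u 0 = x powr \<beta> / (k * x)"
    and F_lower: "\<And>a b. 0 \<le> a \<Longrightarrow> 0 \<le> b \<Longrightarrow> l1 * (1 - (a + b)) \<le> F a b"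
  shows "{t. 0 < t \<and> u t = 1 / k} \<noteq> {}"
    and "recurrence_time u (1 / k) \<le> (min (1 - \<beta>) \<alpha> * ln x + hitting_const) / l1"
proof -
  have "y t = exp (l0 * t) / k" if "0 \<le> t" for t
    using DERIV_linear_imp_exp[OF y_deriv that] \<open>y 0 = 1 / k\<close> by simp
  moreover note u_0_bounds = powr_over_linear_bounds[OF \<open>1 < x\<close> \<open>\<beta> < 1\<close> order.strict_trans[OF zero_less_one k_gt_1],
      folded u_0]
  ultimately interpret logistic_with_immigration l0 l1 k "x powr - \<alpha>" y u "\<lambda>t. F (y t) (u t)"
    using k_gt_1 u_deriv \<open>1 < x\<close> by unfold_locales (auto intro!: F_lower)
  have "- (min (1 - \<beta>) \<alpha> * ln x) - ln k \<le> ln (u 0)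
      \<or> - (min (1 - \<beta>) \<alpha> * ln x) \<le> ln (x powr - \<alpha>)"
    using u_0_bounds(3) k_gt_1 \<open>1 < x\<close> by (cases "1 - \<beta> \<le> \<alpha>") (auto simp: ln_powr)
  moreover have "0 \<le> min (1 - \<beta>) \<alpha> * ln x" using assms(1-4) by simp
  ultimately show "{t. 0 < t \<and> u t = 1 / k} \<noteq> {}"
    and "recurrence_time u (1 / k) \<le> (min (1 - \<beta>) \<alpha> * ln x + hitting_const) / l1"
    using recurrence_time_bound by blast+
qed

end

theorem lemmaA1:
  fixes r0 d0 d1 k \<alpha> \<beta> :: real
    and f :: "real \<Rightarrow> real \<Rightarrow> real"
    and y0 y1 yb :: "nat \<Rightarrow> real \<Rightarrow> real"
  assumes r0: "r0 \<ge> 0" and d0: "d0 \<ge> 0" and lam0: "r0 - d0 < 0"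
    and d1: "d1 > 0" and k: "k > 1"
    and alpha: "0 < \<alpha>" "\<alpha> < 1" and beta: "0 < \<beta>" "\<beta> < 1"
    and f_nonneg: "\<And>x y. x \<ge> 0 \<Longrightarrow> y \<ge> 0 \<Longrightarrow> f x y \<ge> 0"
    and A1: "\<exists>L. L-lipschitz_on {p :: real \<times> real. fst p \<ge> 0 \<and> snd p \<ge> 0} (\<lambda>p. f (fst p) (snd p))"
    and A2a: "\<And>x y. x \<ge> 0 \<Longrightarrow> y \<ge> 0 \<Longrightarrow> x + y = 0 \<Longrightarrow> f x y = f 0 0"
    and A2b: "\<And>x y. x \<ge> 0 \<Longrightarrow> y \<ge> 0 \<Longrightarrow> x + y = 1 \<Longrightarrow> f x y = d1"
    and A2c: "f 0 0 > d1"
    and A3: "\<exists>\<Phi> :: real \<Rightarrow> real. (\<forall>s\<ge>0. \<Phi> s \<ge> 0)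
               \<and> (\<forall>s t. 0 \<le> s \<longrightarrow> s \<le> t \<longrightarrow> \<Phi> t \<le> \<Phi> s)
               \<and> (\<forall>x y. x \<ge> 0 \<longrightarrow> y \<ge> 0 \<longrightarrow> f x y = \<Phi> (x + y))"
    and A4x: "\<And>y. y \<ge> 0 \<Longrightarrow> ((\<lambda>x. f x y) \<longlongrightarrow> 0) at_top"
    and A4y: "\<And>x. x \<ge> 0 \<Longrightarrow> ((\<lambda>y. f x y) \<longlongrightarrow> 0) at_top"
    and A5: "\<And>x y. x \<ge> 0 \<Longrightarrow> y \<ge> 0 \<Longrightarrow> f x y \<ge> (f 0 0 - d1) * (1 - (x + y)) + d1"
    and ode0: "\<And>n t. n \<ge> 1 \<Longrightarrow> t \<ge> 0 \<Longrightarrow>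
               (y0 n has_real_derivative (r0 - d0) * y0 n t) (at t within {0..})"
    and ode1: "\<And>n t. n \<ge> 1 \<Longrightarrow> t \<ge> 0 \<Longrightarrow>
               (y1 n has_real_derivative
                  (f (y0 n t) (y1 n t) - d1) * y1 n t + real n powr (-\<alpha>) * y0 n t) (at t within {0..})"
    and odeb: "\<And>n t. n \<ge> 1 \<Longrightarrow> t \<ge> 0 \<Longrightarrow>
               (yb n has_real_derivative (f (y0 n t) (y1 n t) - d1) * yb n t) (at t within {0..})"
    and init0: "\<And>n. n \<ge> 1 \<Longrightarrow> y0 n 0 = real n / (k * real n)"
    and init1: "\<And>n. n \<ge> 1 \<Longrightarrow> y1 n 0 = real n powr \<beta> / (k * real n)"
    and initb: "\<And>n. n \<ge> 1 \<Longrightarrow> yb n 0 = real n powr \<beta> / (k * real n)"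
  shows "\<exists>C > 0. \<forall>\<^sub>F n in sequentially.
           {t. t > 0 \<and> y1 n t = real n / (k * real n)} \<noteq> {} \<and>
           recurrence_time (y1 n) (real n / (k * real n))
             < C + min (1 - \<beta>) \<alpha> / (f 0 0 - d1) * ln (real n)"
proof -
  define l0 l1 where "l0 = r0 - d0" and "l1 = f 0 0 - d1"
  interpret decay_rates l0 l1 k
    using lam0 A2c k unfolding l0_def l1_def by unfold_locales auto
  have F_lower: "l1 * (1 - (a + b)) \<le> f a b - d1" if "0 \<le> a" "0 \<le> b" for a b
    using A5[OF that] unfolding l1_def by simp
  show ?thesis unfolding l1_def[symmetric]
  proof (intro exI conjI)
    show "0 < hitting_const / l1 + 1"
      using hitting_const_pos l1_pos by (intro add_pos_pos divide_pos_pos) simp_all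
    show "\<forall>\<^sub>F n in sequentially. {t. 0 < t \<and> y1 n t = real n / (k * real n)} \<noteq> {} \<and>
        recurrence_time (y1 n) (real n / (k * real n))
          < hitting_const / l1 + 1 + min (1 - \<beta>) \<alpha> / l1 * ln (real n)"
      using eventually_ge_at_top[of 2]
    proof eventually_elim
      case (elim n)
      then have "1 \<le> n" "1 < real n" "real n / (k * real n) = 1 / k" by auto
      moreover have "(min (1 - \<beta>) \<alpha> * ln n + hitting_const) / l1
          < hitting_const / l1 + 1 + min (1 - \<beta>) \<alpha> / l1 * ln n"
        using l1_pos by (simp add: add_divide_distrib)
      ultimately show ?case
        using recurrence_time_log_bound[of n \<alpha> \<beta> "y0 n" "y1 n" "\<lambda>a b. f a b - d1"]
          alpha beta ode0 ode1 init0 init1 F_lower by (force simp: l0_def)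
    qed
  qed
qed

end
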